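(* Consider the following game over slots $1,\dots,T$ with $N\ge2$ users. The BS chooses a pmf $\mathbf p=(p_1,\dots,p_N)$ and in every slot, independently, schedules user $i$ with probability $p_i$. The adversary chooses a blocking matrix $\sigma\in\{0,1\}^{N\times T}$, where $\sigma_i(t)=0$ means user $i$ is blocked in slot $t$. Feasibility means $\sum_{i,t}(1-\sigma_i(t))\le\alpha T$ and at most one user is blocked per slot, where $0<\alpha<1$. Ages satisfy $a_i(1)=1$ and $a_i(t+1)=1$ if user $i$ is scheduled and not blocked in slot $t$, and $a_i(t+1)=a_i(t)+1$ otherwise. The payoff is $\Delta^{\mathbf p,\sigma}=\frac1T\sum_{t=1}^T\frac1N\sum_i\mathbb E[a_i(t)]$; the BS minimizes it and the adversary maximizes it. Then, for all sufficiently large $T$ with $\alpha T\in\mathbb Z$, this game has no Nash equilibrium. That is, there is no pair $(\bar{\mathbf p},\bar\sigma)$ with $\Delta^{\bar{\mathbf p},\bar\sigma}\le\Delta^{\mathbf p,\bar\sigma}$ for all pmfs $\mathbf p$ and $\Delta^{\bar{\mathbf p},\bar\sigma}\ge\Delta^{\bar{\mathbf p},\sigma}$ for all feasible $\sigma$. *)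

theory Defs
  imports "HOL-Probability.Probability"
begin

(* Users are 0..N-1, slots are 1..T.
   A blocking matrix is sigma :: nat => nat => bool, where  sigma i t = True  means
   sigma_i(t) = 1 (user i NOT blocked in slot t) and False means blocked.
   A schedule is s :: nat => nat, s t = user scheduled in slot t. *)

(* age s i t = a_i(t) for t >= 1; the value at t = 0 is an unused dummy *)
fun age :: "(nat \<Rightarrow> nat \<Rightarrow> bool) \<Rightarrow> (nat \<Rightarrow> nat) \<Rightarrow> nat \<Rightarrow> nat \<Rightarrow> nat" where
  "age \<sigma> s i 0 = 1"
| "age \<sigma> s i (Suc 0) = 1"
| "age \<sigma> s i (Suc (Suc t)) =
     (if s (Suc t) = i \<and> \<sigma> i (Suc t) then 1 else age \<sigma> s i (Suc t) + 1)"

definition user_pmf :: "nat \<Rightarrow> nat pmf \<Rightarrow> bool" where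
  "user_pmf N p \<longleftrightarrow> set_pmf p \<subseteq> {..<N}"

definition sched_pmf :: "nat \<Rightarrow> nat pmf \<Rightarrow> (nat \<Rightarrow> nat) pmf" where
  "sched_pmf T p = Pi_pmf {1..T} 0 (\<lambda>_. p)"

definition feasible :: "nat \<Rightarrow> nat \<Rightarrow> real \<Rightarrow> (nat \<Rightarrow> nat \<Rightarrow> bool) \<Rightarrow> bool" where
  "feasible N T \<alpha> \<sigma> \<longleftrightarrow>
     real (card {(i, t). i < N \<and> t \<in> {1..T} \<and> \<not> \<sigma> i t}) \<le> \<alpha> * real T \<and>
     (\<forall>t\<in>{1..T}. \<forall>i<N. \<forall>j<N. \<not> \<sigma> i t \<and> \<not> \<sigma> j t \<longrightarrow> i = j)"

definition payoff :: "nat \<Rightarrow> nat \<Rightarrow> nat pmf \<Rightarrow> (nat \<Rightarrow> nat \<Rightarrow> bool) \<Rightarrow> real" where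
  "payoff N T p \<sigma> =
     (1 / real T) * (\<Sum>t = 1..T. (1 / real N) *
        (\<Sum>i<N. measure_pmf.expectation (sched_pmf T p) (\<lambda>s. real (age \<sigma> s i t))))"

end

theory Submission
  imports Defs
begin

(* The expected age of a user depends only on its scheduling probability x and on its own
   blocking pattern: it is multiplied by 1 - x and increased by 1 in an unblocked slot and
   increased by 1 in a blocked one. Against a pattern with k blocked slots the summed expected
   age is therefore at most (T + k)/x + k(k-1)/2. So against any feasible blocking the BS has a
   response keeping N T times the payoff below
     max ((sqrt (1 + alpha) + N - 1)^2 T + B(B-1)/2) (N^2 T + N B + B(B-2)/2),   B = alpha T,
   weighting the users proportionally to sqrt (1 + alpha) : 1 : ... : 1 if all blocks hit one
   user and uniformly otherwise. Conversely, against any pmf the adversary blocks the least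
   likely user during B consecutive slots in the middle of the horizon; by the harmonic-mean
   inequality this forces at least N^2 T + N B + B(B-1)/2 - O(1). For large T this exceeds both
   terms of the maximum, so no pair of strategies can be best responses to each other. *)

lemma sum_atLeastAtMost_1_add:
  fixes f :: "nat \<Rightarrow> 'a::comm_monoid_add"
  shows "(\<Sum>t = 1..m + n. f t) = (\<Sum>t = 1..m. f t) + (\<Sum>j = 1..n. f (m + j))"
proof -
  have "(\<Sum>t = m + 1..m + n. f t) = (\<Sum>j = 1..n. f (m + j))"
    using sum.shift_bounds_cl_nat_ivl[of f 1 m n] by (simp add: add.commute)
  then show ?thesis
    using sum.ub_add_nat[of 1 m f n] by simp
qed

lemma geometric_sum_1_mult: "x * (\<Sum>j = 1..n. (1 - x) ^ j) = (1 - x) - (1 - x) ^ Suc n" for x :: real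
  using sum_gp_multiplied[of 1 n "1 - x"] by (cases n) auto

lemma geometric_sum_1_le:
  fixes x :: real
  assumes "0 < x" "x \<le> 1"
  shows "(\<Sum>j = 1..n. (1 - x) ^ j) \<le> 1 / x"
proof -
  have "x * (\<Sum>j = 1..n. (1 - x) ^ j) = (1 - x) - (1 - x) ^ Suc n"
    by (rule geometric_sum_1_mult)
  also have "\<dots> \<le> 1"
    using assms zero_le_power[of "1 - x" "Suc n"] by linarith
  finally show ?thesis
    using assms by (simp add: field_simps)
qed

lemma mult_power_le_inverse:
  assumes "0 < x" "x \<le> 1"
  shows "real m * (1 - x) ^ m \<le> 1 / x"
proof -
  have "real m * (1 - x) ^ m = (\<Sum>j = 1..m. (1 - x) ^ m)"
    by simp
  also have "\<dots> \<le> (\<Sum>j = 1..m. (1 - x) ^ j)"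
    using assms by (intro sum_mono power_decreasing) auto
  also have "\<dots> \<le> 1 / x"
    using assms by (rule geometric_sum_1_le)
  finally show ?thesis .
qed

lemma mult_power_divide_le:
  fixes x K b :: real
  assumes "0 < x" "x \<le> 1" "0 \<le> K" "b \<le> K * m"
  shows "b * (1 - x) ^ m / x \<le> K / x\<^sup>2"
proof -
  have "b * (1 - x) ^ m \<le> K * (m * (1 - x) ^ m)"
    using assms by (simp add: mult.assoc[symmetric] mult_right_mono)
  also have "\<dots> \<le> K / x"
    using mult_left_mono[OF mult_power_le_inverse[OF assms(1,2), of m] assms(3)] by simp
  finally show ?thesis
    using assms(1) by (simp add: field_simps power2_eq_square)
qed

lemma sum_inverse_ge_square:
  assumes "\<And>i. i < N \<Longrightarrow> 0 < x i" "(\<Sum>i<N. x i) = 1"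
  shows "real N ^ 2 \<le> (\<Sum>i<N. 1 / x i)"
proof -
  have "2 * N \<le> 1 / x i + N\<^sup>2 * x i" if "i < N" for i
  proof -
    have "0 \<le> (1 - N * x i)\<^sup>2 / x i"
      using assms(1)[OF that] by simp
    then show ?thesis
      using assms(1)[OF that] by (simp add: power2_eq_square field_simps)
  qed
  then have "(\<Sum>i<N. 2 * real N) \<le> (\<Sum>i<N. 1 / x i + N\<^sup>2 * x i)"
    by (intro sum_mono) auto
  with assms(2) show ?thesis
    by (simp add: sum.distrib sum_distrib_left[symmetric] power2_eq_square)
qed

lemma eventually_less_mult_real: "0 < a \<Longrightarrow> \<forall>\<^sub>F T in sequentially. b < a * real T"
proof -
  assume a: "0 < a"
  obtain n :: nat where "b / a < n"
    using reals_Archimedean2 by blast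
  then have "b / a < real T" if "n \<le> T" for T
    using that of_nat_le_iff[of n T, where 'a = real] by linarith
  then have "b < a * real T" if "n \<le> T" for T
    using a that by (simp add: pos_divide_less_eq mult.commute)
  then show ?thesis
    unfolding eventually_sequentially by blast
qed

lemma expectation_pair_pmf_mult:
  fixes f :: "'a \<Rightarrow> real" and g :: "'b \<Rightarrow> real"
  assumes "finite (set_pmf A)" "finite (set_pmf B)"
  shows "measure_pmf.expectation (pair_pmf A B) (\<lambda>z. f (fst z) * g (snd z)) =
         measure_pmf.expectation A f * measure_pmf.expectation B g"
proof -
  have "measure_pmf.expectation (pair_pmf A B) (\<lambda>z. f (fst z) * g (snd z)) =
        (\<Sum>z\<in>set_pmf A \<times> set_pmf B. f (fst z) * g (snd z) * pmf (pair_pmf A B) z)"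
    using assms by (intro integral_measure_pmf_real) auto
  also have "\<dots> = (\<Sum>a\<in>set_pmf A. \<Sum>b\<in>set_pmf B. (f a * pmf A a) * (g b * pmf B b))"
    by (simp add: sum.cartesian_product case_prod_unfold mult_ac)
       (intro sum.cong refl, metis pmf_pair prod.collapse)
  also have "\<dots> = (\<Sum>a\<in>set_pmf A. f a * pmf A a) * (\<Sum>b\<in>set_pmf B. g b * pmf B b)"
    by (simp add: sum_product)
  also have "\<dots> = measure_pmf.expectation A f * measure_pmf.expectation B g"
    using assms by (simp add: integral_measure_pmf_real[of "set_pmf _"])
  finally show ?thesis .
qed

lemma expectation_if_eq_0_1:
  "measure_pmf.expectation p (\<lambda>y. if y = i \<and> c then 0 else 1 :: real) = (if c then 1 - pmf p i else 1)"
proof (cases c)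
  case True
  then have "(\<lambda>y. if y = i \<and> c then 0 else 1 :: real) = (\<lambda>y. 1 - indicator {i} y)"
    by (auto simp: fun_eq_iff)
  moreover have "measure_pmf.expectation p (\<lambda>y. 1 - indicator {i} y :: real) = 1 - pmf p i"
    by (subst Bochner_Integration.integral_diff)
      (auto simp: measure_pmf.prob_space measure_pmf_single measure_pmf.integrable_const_bound[where B = 1])
  ultimately show ?thesis
    using True by simp
qed simp

lemma finite_set_Pi_pmf_const:
  "finite A \<Longrightarrow> finite (set_pmf p) \<Longrightarrow> finite (set_pmf (Pi_pmf A d (\<lambda>_. p)))"
  by (rule finite_subset[OF set_Pi_pmf_subset']) (auto intro!: finite_PiE_dflt)

section \<open>Expected ages\<close>

lemma age_cong: "(\<And>u. u < t \<Longrightarrow> s u = s' u) \<Longrightarrow> age \<sigma> s i t = age \<sigma> s' i t"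
  by (induction \<sigma> s i t rule: age.induct) auto

(* For t \<ge> 1, mean_age x b t is the expected age at slot t of a user that is scheduled with
   probability x in every slot and is unblocked exactly in the slots u with b u. *)
fun mean_age :: "real \<Rightarrow> (nat \<Rightarrow> bool) \<Rightarrow> nat \<Rightarrow> real" where
  "mean_age x b 0 = 1"
| "mean_age x b (Suc 0) = 1"
| "mean_age x b (Suc (Suc t)) = 1 + (if b (Suc t) then 1 - x else 1) * mean_age x b (Suc t)"

lemma mean_age_Suc: "1 \<le> t \<Longrightarrow> mean_age x b (Suc t) = 1 + (if b t then 1 - x else 1) * mean_age x b t"
  by (cases t) auto

definition total_age :: "real \<Rightarrow> (nat \<Rightarrow> bool) \<Rightarrow> nat \<Rightarrow> real" where
  "total_age x b T = (\<Sum>t = 1..T. mean_age x b t)"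

lemma expectation_age_Pi_pmf:
  assumes p: "finite (set_pmf p)"
  shows "finite A \<Longrightarrow> {1..<t} \<subseteq> A \<Longrightarrow>
    measure_pmf.expectation (Pi_pmf A 0 (\<lambda>_. p)) (\<lambda>s. real (age \<sigma> s i t)) = mean_age (pmf p i) (\<sigma> i) t"
proof (induction t arbitrary: A)
  case (Suc t)
  show ?case
  proof (cases "t = 0")
    case False
    define A' where "A' = A - {t}"
    have A: "A = insert t A'" "t \<notin> A'" "finite A'"
      using Suc.prems False by (auto simp: A'_def)
    have IH: "measure_pmf.expectation (Pi_pmf A' 0 (\<lambda>_. p)) (\<lambda>s. real (age \<sigma> s i t)) = mean_age (pmf p i) (\<sigma> i) t"
      using Suc.prems by (intro Suc.IH) (auto simp: A'_def)
    have age_upd: "real (age \<sigma> (f(t := y)) i (Suc t)) = (if y = i \<and> \<sigma> i t then 0 else 1) * real (age \<sigma> f i t) + 1"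
      for f y
      using False age_cong[of t "f(t := y)" f \<sigma> i] by (cases t) auto
    (* Split off the independent draw for slot t, on which the age at slot t does not depend. *)
    have "measure_pmf.expectation (Pi_pmf A 0 (\<lambda>_. p)) (\<lambda>s. real (age \<sigma> s i (Suc t))) =
          measure_pmf.expectation (pair_pmf p (Pi_pmf A' 0 (\<lambda>_. p)))
            (\<lambda>z. (if fst z = i \<and> \<sigma> i t then 0 else 1) * real (age \<sigma> (snd z) i t) + 1)"
      using A by (simp add: Pi_pmf_insert case_prod_unfold age_upd)
    also have "\<dots> = measure_pmf.expectation (pair_pmf p (Pi_pmf A' 0 (\<lambda>_. p)))
            (\<lambda>z. (if fst z = i \<and> \<sigma> i t then 0 else 1) * real (age \<sigma> (snd z) i t)) + 1"
      using A p by (subst Bochner_Integration.integral_add)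
        (auto intro!: integrable_measure_pmf_finite simp: finite_set_Pi_pmf_const)
    also have "\<dots> = (if \<sigma> i t then 1 - pmf p i else 1) * mean_age (pmf p i) (\<sigma> i) t + 1"
      using A p by (subst expectation_pair_pmf_mult) (auto simp: finite_set_Pi_pmf_const expectation_if_eq_0_1 IH)
    finally show ?thesis
      using False by (simp add: mean_age_Suc)
  qed simp
qed simp

lemma payoff_eq_total_age:
  assumes "user_pmf N p"
  shows "payoff N T p \<sigma> = (\<Sum>i<N. total_age (pmf p i) (\<sigma> i) T) / (real T * real N)"
proof -
  have "finite (set_pmf p)"
    using assms unfolding user_pmf_def by (rule finite_subset) simp
  then have "measure_pmf.expectation (sched_pmf T p) (\<lambda>s. real (age \<sigma> s i t)) = mean_age (pmf p i) (\<sigma> i) t"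
    if "t \<in> {1..T}" for i t
    unfolding sched_pmf_def using that by (intro expectation_age_Pi_pmf) auto
  then have "payoff N T p \<sigma> = (\<Sum>t = 1..T. \<Sum>i<N. mean_age (pmf p i) (\<sigma> i) t) / (real T * real N)"
    by (simp add: payoff_def sum_divide_distrib[symmetric] sum_distrib_left[symmetric])
  also have "(\<Sum>t = 1..T. \<Sum>i<N. mean_age (pmf p i) (\<sigma> i) t) = (\<Sum>i<N. total_age (pmf p i) (\<sigma> i) T)"
    unfolding total_age_def by (rule sum.swap)
  finally show ?thesis .
qed

lemma payoff_less_payoff:
  fixes T :: nat
  assumes "user_pmf N p" "user_pmf N p'"
    and less: "(\<Sum>i<N. total_age (pmf p i) (\<sigma> i) T) < (\<Sum>i<N. total_age (pmf p' i) (\<sigma>' i) T)"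
  shows "payoff N T p \<sigma> < payoff N T p' \<sigma>'"
proof -
  have "T \<noteq> 0"
  proof
    assume "T = 0"
    with less show False
      by (simp add: total_age_def)
  qed
  moreover have "N \<noteq> 0"
  proof
    assume "N = 0"
    with less show False
      by simp
  qed
  ultimately have "0 < real T * N"
    by simp
  with less show ?thesis
    unfolding payoff_eq_total_age[OF assms(1)] payoff_eq_total_age[OF assms(2)]
    by (rule divide_strict_right_mono)
qed

lemma mean_age_ge_one: "0 \<le> x \<Longrightarrow> x \<le> 1 \<Longrightarrow> 1 \<le> mean_age x b t"
  by (induction x b t rule: mean_age.induct) auto

lemma mean_age_antimono: "0 \<le> x \<Longrightarrow> x \<le> y \<Longrightarrow> y \<le> 1 \<Longrightarrow> mean_age y b t \<le> mean_age x b t"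
proof (induction y b t rule: mean_age.induct)
  case (3 y b t)
  then have "mean_age y b (Suc t) \<le> mean_age x b (Suc t)" "0 \<le> mean_age y b (Suc t)"
    using mean_age_ge_one[of y b "Suc t"] by auto
  with 3 show ?case
    by (auto intro!: mult_mono)
qed auto

lemma total_age_nonneg: "0 \<le> x \<Longrightarrow> x \<le> 1 \<Longrightarrow> 0 \<le> total_age x b T"
  unfolding total_age_def by (intro sum_nonneg order_trans[OF zero_le_one mean_age_ge_one])

lemma total_age_antimono: "0 \<le> x \<Longrightarrow> x \<le> y \<Longrightarrow> y \<le> 1 \<Longrightarrow> total_age y b T \<le> total_age x b T"
  unfolding total_age_def by (intro sum_mono mean_age_antimono)

lemma mean_age_unblocked_run:
  assumes "x \<noteq> 0" "1 \<le> m" "\<And>j. j < n \<Longrightarrow> b (m + j)"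
  shows "mean_age x b (m + n) - 1 / x = (1 - x) ^ n * (mean_age x b m - 1 / x)"
  using assms(3)
proof (induction n)
  case (Suc n)
  have "b (m + n)"
    using Suc.prems by blast
  then have "mean_age x b (m + Suc n) - 1 / x = (1 - x) * (mean_age x b (m + n) - 1 / x)"
    using assms(1,2) by (simp add: mean_age_Suc field_simps)
  with Suc show ?case
    by simp
qed simp

lemma mean_age_blocked_run:
  assumes "1 \<le> m" "\<And>j. j < n \<Longrightarrow> \<not> b (m + j)"
  shows "mean_age x b (m + n) = mean_age x b m + n"
  using assms(2)
proof (induction n)
  case (Suc n)
  then show ?case
    using assms(1) by (simp add: mean_age_Suc)
qed simp

lemma mean_age_unblocked_prefix:
  assumes "x \<noteq> 0" "1 \<le> t" "\<And>u. 1 \<le> u \<Longrightarrow> u < t \<Longrightarrow> b u"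
  shows "mean_age x b t = 1 / x - (1 - x) ^ t / x"
proof -
  have "mean_age x b (1 + (t - 1)) - 1 / x = (1 - x) ^ (t - 1) * (mean_age x b 1 - 1 / x)"
    by (rule mean_age_unblocked_run) (use assms in auto)
  also have "\<dots> = - ((1 - x) ^ t / x)"
    using assms by (cases t) (auto simp: field_simps)
  finally show ?thesis
    using assms(2) by simp
qed

lemma total_age_unblocked_prefix_lower:
  assumes "0 < x" "x \<le> 1" "\<And>u. 1 \<le> u \<Longrightarrow> u < c \<Longrightarrow> b u"
  shows "real c / x - 1 / x\<^sup>2 \<le> total_age x b c"
proof -
  have "total_age x b c = (\<Sum>t = 1..c. 1 / x - (1 - x) ^ t / x)"
    unfolding total_age_def using assms by (intro sum.cong refl mean_age_unblocked_prefix) auto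
  also have "\<dots> = real c / x - (\<Sum>t = 1..c. (1 - x) ^ t) / x"
    by (simp add: sum_subtractf sum_divide_distrib)
  moreover have "(\<Sum>t = 1..c. (1 - x) ^ t) / x \<le> (1 / x) / x"
    using assms by (intro divide_right_mono geometric_sum_1_le) auto
  ultimately show ?thesis
    by (simp add: power2_eq_square)
qed

lemma sum_mean_age_blocked_run:
  assumes "1 \<le> m" "\<And>j. j < n \<Longrightarrow> \<not> b (m + j)"
  shows "(\<Sum>j = 1..n. mean_age x b (m + j)) = real n * mean_age x b m + real n * (real n + 1) / 2"
proof -
  have "(\<Sum>j = 1..n. mean_age x b (m + j)) = (\<Sum>j = 1..n. mean_age x b m + j)"
    using assms by (intro sum.cong refl mean_age_blocked_run) auto
  then show ?thesis
    using double_gauss_sum_from_Suc_0[of n, where 'a = real] by (simp add: sum.distrib)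
qed

lemma sum_mean_age_unblocked_run:
  assumes "x \<noteq> 0" "1 \<le> m" "\<And>j. j < n \<Longrightarrow> b (m + j)"
  shows "(\<Sum>j = 1..n. mean_age x b (m + j)) = n / x + (mean_age x b m - 1 / x) * (\<Sum>j = 1..n. (1 - x) ^ j)"
proof -
  have "(\<Sum>j = 1..n. mean_age x b (m + j)) = (\<Sum>j = 1..n. 1 / x + (mean_age x b m - 1 / x) * (1 - x) ^ j)"
    using assms mean_age_unblocked_run[OF assms(1,2)] by (intro sum.cong refl) (simp add: algebra_simps)
  then show ?thesis
    by (simp add: sum.distrib sum_distrib_left)
qed

section \<open>Upper bound in terms of the number of blocked slots\<close>

definition blocked_slots :: "(nat \<Rightarrow> bool) \<Rightarrow> nat \<Rightarrow> nat" where
  "blocked_slots b T = card {t \<in> {1..T}. \<not> b t}"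

lemma blocked_slots_Suc: "blocked_slots b (Suc n) = blocked_slots b n + (if b (Suc n) then 0 else 1)"
proof -
  have "{t \<in> {1..Suc n}. \<not> b t} = {t \<in> {1..n}. \<not> b t} \<union> (if b (Suc n) then {} else {Suc n})"
    by (auto simp: le_Suc_eq)
  then show ?thesis
    unfolding blocked_slots_def by simp
qed

lemma decay_positive_part_le:
  fixes x d :: real
  assumes "0 < x" "x \<le> 1"
  shows "d + max ((1 - x) * d) 0 / x \<le> max d 0 / x \<and> (1 - x) * d \<le> max d 0"
proof (cases "0 \<le> d")
  case True
  have "d + (1 - x) * d / x = d / x"
    using assms by (simp add: field_simps)
  moreover have "(1 - x) * d \<le> d"
    using assms True by (simp add: mult_left_le_one_le)
  ultimately show ?thesis
    using assms True by simp
next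
  case False
  then have "(1 - x) * d \<le> 0"
    using assms by (simp add: mult_nonneg_nonpos)
  then show ?thesis
    using False by simp
qed

(* A potential argument for the excess d = mean_age - 1/x: it is multiplied by 1 - x in an
   unblocked slot, so a positive excess d still contributes at most d/x to the future sum,
   while each blocked slot raises the excess by one. *)
lemma sum_excess_age_potential:
  assumes x: "0 < x" "x \<le> 1"
  shows "(\<Sum>t = 1..n. mean_age x b t - 1 / x) + max (mean_age x b (Suc n) - 1 / x) 0 / x
           \<le> blocked_slots b n / x + blocked_slots b n * (real (blocked_slots b n) - 1) / 2
         \<and> mean_age x b (Suc n) - 1 / x \<le> blocked_slots b n"
proof (induction n)
  case 0
  have "1 - 1 / x \<le> 0"
    using x by (simp add: field_simps)
  then show ?case
    by (simp add: blocked_slots_def max_def)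
next
  case (Suc n)
  define k where "k = real (blocked_slots b n)"
  define d where "d = mean_age x b (Suc n) - 1 / x"
  define S where "S = (\<Sum>t = 1..n. mean_age x b t - 1 / x)"
  have IH: "S + max d 0 / x \<le> k / x + k * (k - 1) / 2" "d \<le> k"
    using Suc unfolding k_def d_def S_def by auto
  have sum: "(\<Sum>t = 1..Suc n. mean_age x b t - 1 / x) = S + d"
    by (simp add: S_def d_def)
  show ?case
  proof (cases "b (Suc n)")
    case True
    have "max d 0 \<le> k"
      using IH(2) by (simp add: k_def)
    then have "(1 - x) * d \<le> k"
      using decay_positive_part_le[OF x, of d] by linarith
    moreover have "mean_age x b (Suc (Suc n)) - 1 / x = (1 - x) * d"
      using True x by (simp add: d_def field_simps)
    ultimately show ?thesis
      using IH decay_positive_part_le[OF x, of d] unfolding sum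
      by (simp add: blocked_slots_Suc True k_def[symmetric])
  next
    case False
    have "mean_age x b (Suc (Suc n)) - 1 / x = d + 1"
      using False x by (simp add: d_def)
    moreover have "max (d + 1) 0 / x \<le> max d 0 / x + 1 / x"
      using x by (simp add: divide_right_mono flip: add_divide_distrib)
    moreover have "(k + 1) * (k + 1 - 1) / 2 = k * (k - 1) / 2 + k"
      by (simp add: field_simps)
    moreover have "real (blocked_slots b (Suc n)) = k + 1"
      using False by (simp add: blocked_slots_Suc k_def)
    ultimately show ?thesis
      using IH unfolding sum by (simp only: add_divide_distrib) linarith
  qed
qed

lemma total_age_upper:
  assumes "0 < x" "x \<le> 1" "blocked_slots b T \<le> k"
  shows "total_age x b T \<le> (T + k) / x + real k * (real k - 1) / 2"
proof -
  define m where "m = blocked_slots b T"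
  have "0 \<le> max (mean_age x b (Suc T) - 1 / x) 0 / x"
    using assms(1) by simp
  then have "(\<Sum>t = 1..T. mean_age x b t - 1 / x) \<le> m / x + real m * (real m - 1) / 2"
    using sum_excess_age_potential[OF assms(1,2), of b T] unfolding m_def by linarith
  moreover have "(\<Sum>t = 1..T. mean_age x b t - 1 / x) = total_age x b T - T / x"
    unfolding total_age_def by (simp add: sum_subtractf)
  moreover have "real m / x \<le> k / x"
    using assms by (simp add: m_def divide_right_mono)
  moreover have "real m * (real m - 1) \<le> real k * (real k - 1)"
    using assms(3) unfolding m_def[symmetric] by (cases m; cases k) (auto intro!: mult_mono)
  ultimately show ?thesis
    by (simp add: add_divide_distrib)
qed

section \<open>Lower bound for a single block of consecutive blocked slots\<close>

definition unblocked_outside :: "nat \<Rightarrow> nat \<Rightarrow> nat \<Rightarrow> bool" where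
  "unblocked_outside c B t \<longleftrightarrow> t < c \<or> c + B \<le> t"

lemma total_age_unblocked_outside:
  fixes x G :: real and c B L :: nat
  assumes "x \<noteq> 0" "1 \<le> c"
  defines "G \<equiv> \<Sum>j = 1..L. (1 - x) ^ j"
  shows "total_age x (unblocked_outside c B) (c + B + L) =
           total_age x (unblocked_outside c B) c + B / x - B * (1 - x) ^ c / x + real B * (real B + 1) / 2
           + L / x + B * G - (1 - x) ^ c / x * G"
proof -
  let ?b = "unblocked_outside c B"
  have at_c: "mean_age x ?b c = 1 / x - (1 - x) ^ c / x"
    using assms by (intro mean_age_unblocked_prefix) (auto simp: unblocked_outside_def)
  have "(\<Sum>j = 1..B. mean_age x ?b (c + j)) = B * mean_age x ?b c + real B * (real B + 1) / 2"
    using assms by (intro sum_mean_age_blocked_run) (auto simp: unblocked_outside_def)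
  moreover have "mean_age x ?b (c + B) = 1 / x - (1 - x) ^ c / x + B"
    using assms at_c by (subst mean_age_blocked_run) (auto simp: unblocked_outside_def)
  then have "(\<Sum>j = 1..L. mean_age x ?b (c + B + j)) = L / x + (B - (1 - x) ^ c / x) * G"
    using assms by (subst sum_mean_age_unblocked_run) (auto simp: unblocked_outside_def)
  ultimately show ?thesis
    unfolding total_age_def sum_atLeastAtMost_1_add at_c by (simp add: right_diff_distrib left_diff_distrib)
qed

lemma total_age_unblocked_outside_lower:
  assumes x: "0 < x" "x \<le> 1" and c: "1 \<le> c"
    and K: "0 \<le> K" "real B \<le> K * c" "real B \<le> K * L"
  shows "real (c + B + L) / x + real B * (real B + 1) / 2 + B * (1 - x) / x - (2 + 2 * K) / x\<^sup>2
           \<le> total_age x (unblocked_outside c B) (c + B + L)"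
proof -
  define r where "r = 1 - x"
  define G where "G = (\<Sum>j = 1..L. r ^ j)"
  have r: "0 \<le> r" "r \<le> 1"
    using x by (auto simp: r_def)
  have before: "c / x - 1 / x\<^sup>2 \<le> total_age x (unblocked_outside c B) c"
    using x by (intro total_age_unblocked_prefix_lower) (auto simp: unblocked_outside_def)
  have "r ^ c * G \<le> 1 * (1 / x)"
    using r x geometric_sum_1_le[OF x] unfolding G_def r_def
    by (intro mult_mono) (auto simp: power_le_one sum_nonneg)
  then have tail: "r ^ c / x * G \<le> 1 / x\<^sup>2"
    using x by (simp add: field_simps power2_eq_square)
  have decay: "r * (B * r ^ L / x) \<le> B * r ^ L / x"
    by (rule mult_left_le_one_le) (use r x in auto)
  have xG: "x * G = r - r * r ^ L"
    using geometric_sum_1_mult[of x L] unfolding G_def r_def by simp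
  have "B * G = B * (x * G) / x"
    using x by simp
  also have "\<dots> = B * r / x - r * (B * r ^ L / x)"
    unfolding xG by (simp add: algebra_simps diff_divide_distrib)
  finally have "B * G = B * r / x - r * (B * r ^ L / x)" .
  moreover have "real (c + B + L) / x = c / x + B / x + L / x"
    by (simp add: add_divide_distrib)
  moreover have "(2 + 2 * K) / x\<^sup>2 = 2 * (1 / x\<^sup>2) + 2 * (K / x\<^sup>2)"
    by (simp add: add_divide_distrib)
  moreover have "total_age x (unblocked_outside c B) (c + B + L) =
      total_age x (unblocked_outside c B) c + B / x - B * r ^ c / x + real B * (real B + 1) / 2
      + L / x + B * G - r ^ c / x * G"
    using x c unfolding r_def G_def by (intro total_age_unblocked_outside) auto
  ultimately show ?thesis
    using before decay tail mult_power_divide_le[OF x K(1,2)] mult_power_divide_le[OF x K(1,3)]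
    unfolding r_def[symmetric]
    by linarith
qed

lemma total_age_unblocked_outside_lower_uniform:
  fixes c B L T :: nat and K \<kappa> x :: real
  assumes x: "0 < \<kappa>" "\<kappa> \<le> x" "x \<le> 1" "real N * x \<le> 1"
    and w: "T = c + B + L" "1 \<le> c" "0 \<le> K" "real B \<le> K * c" "real B \<le> K * L"
  shows "T / x + real B * (real B - 1) / 2 + real N * B - (2 + 2 * K) / \<kappa>\<^sup>2
           \<le> total_age x (unblocked_outside c B) T"
proof -
  have "T / x + real B * (real B + 1) / 2 + B * (1 - x) / x - (2 + 2 * K) / x\<^sup>2
      \<le> total_age x (unblocked_outside c B) T"
    unfolding w(1) using x w(2-) by (intro total_age_unblocked_outside_lower) auto
  moreover have "real B * (real N - 1) \<le> B * (1 - x) / x"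
  proof -
    have "real N - 1 \<le> (1 - x) / x"
      using x by (simp add: field_simps)
    from mult_left_mono[OF this, of "real B"] show ?thesis
      by simp
  qed
  moreover have "1 / x\<^sup>2 \<le> 1 / \<kappa>\<^sup>2"
    using x by (intro divide_left_mono power_mono) auto
  from mult_left_mono[OF this, of "2 + 2 * K"] have "(2 + 2 * K) / x\<^sup>2 \<le> (2 + 2 * K) / \<kappa>\<^sup>2"
    using w(3) by simp
  moreover have "real B * (real B + 1) / 2 = real B * (real B - 1) / 2 + B"
    by (simp add: field_simps)
  moreover have "real B * (real N - 1) = real N * B - B"
    by (simp add: algebra_simps)
  ultimately show ?thesis
    by linarith
qed

section \<open>Best responses of the base station\<close>

lemma sum_pmf_user_pmf: "user_pmf N p \<Longrightarrow> (\<Sum>i<N. pmf p i) = 1"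
  unfolding user_pmf_def by (intro sum_pmf_eq_1) auto

lemma user_pmf_exists:
  assumes "\<And>i. i < N \<Longrightarrow> 0 \<le> w i" "(\<Sum>i<N. w i) = 1"
  shows "\<exists>p. user_pmf N p \<and> (\<forall>i<N. pmf p i = w i)"
proof -
  define f where "f i = (if i < N then w i else 0)" for i
  have f: "0 \<le> f i" for i
    using assms(1) by (simp add: f_def)
  have "(\<integral>\<^sup>+i. ennreal (f i) \<partial>count_space UNIV) = (\<Sum>i<N. ennreal (f i))"
    by (rule nn_integral_count_space') (auto simp: f_def)
  also have "\<dots> = ennreal (\<Sum>i<N. f i)"
    using f by (intro sum_ennreal) auto
  also have "(\<Sum>i<N. f i) = 1"
    using assms(2) by (simp add: f_def)
  finally have "(\<integral>\<^sup>+i. ennreal (f i) \<partial>count_space UNIV) = 1"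
    by simp
  with f show ?thesis
    by (intro exI[of _ "embed_pmf f"])
      (auto simp: user_pmf_def set_embed_pmf pmf_embed_pmf f_def split: if_splits)
qed

lemma sum_blocked_slots_le:
  assumes "feasible N T \<alpha> \<sigma>"
  shows "real (\<Sum>i<N. blocked_slots (\<sigma> i) T) \<le> \<alpha> * T"
proof -
  have "{(i, t). i < N \<and> t \<in> {1..T} \<and> \<not> \<sigma> i t} = Sigma {..<N} (\<lambda>i. {t \<in> {1..T}. \<not> \<sigma> i t})"
    by auto
  then have "card {(i, t). i < N \<and> t \<in> {1..T} \<and> \<not> \<sigma> i t} = (\<Sum>i<N. blocked_slots (\<sigma> i) T)"
    by (simp add: card_SigmaI blocked_slots_def)
  with assms show ?thesis
    unfolding feasible_def by simp
qed

lemma sum_total_age_upper: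
  fixes k :: "nat \<Rightarrow> nat" and T :: nat
  assumes "\<And>i. i < N \<Longrightarrow> 0 < pmf p i" "\<And>i. i < N \<Longrightarrow> blocked_slots (\<sigma> i) T \<le> k i"
  shows "(\<Sum>i<N. total_age (pmf p i) (\<sigma> i) T)
           \<le> (\<Sum>i<N. (T + k i) / pmf p i + real (k i) * (real (k i) - 1) / 2)"
proof (intro sum_mono)
  fix i assume "i \<in> {..<N}"
  then show "total_age (pmf p i) (\<sigma> i) T \<le> (T + k i) / pmf p i + real (k i) * (real (k i) - 1) / 2"
    using assms total_age_upper[of "pmf p i" "\<sigma> i" T "k i"] pmf_le_1[of p i] by simp
qed

(* The weights minimise (T + B)/w_j + T * (sum of 1/w_i over i different from j) subject to
   sum w = 1; since T + B = (1 + alpha) T, this gives w_j : w_i = sqrt (1 + alpha) : 1. *)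
lemma best_response_concentrated_blocking:
  assumes j: "j < N" and \<alpha>: "0 \<le> \<alpha>" "real B = \<alpha> * T"
    and k: "blocked_slots (\<sigma> j) T \<le> B" "\<And>i. i < N \<Longrightarrow> i \<noteq> j \<Longrightarrow> blocked_slots (\<sigma> i) T = 0"
  shows "\<exists>p. user_pmf N p \<and>
           (\<Sum>i<N. total_age (pmf p i) (\<sigma> i) T) \<le> (sqrt (1 + \<alpha>) + N - 1)\<^sup>2 * T + real B * (real B - 1) / 2"
proof -
  define s where "s = sqrt (1 + \<alpha>)"
  define D where "D = s + N - 1"
  define w where "w i = (if i = j then s else 1) / D" for i
  have s: "1 \<le> s" "s\<^sup>2 = 1 + \<alpha>"
    using \<alpha> by (auto simp: s_def)
  have D: "0 < D"
    using s j by (simp add: D_def)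
  have "(\<Sum>i<N. w i) = (s + real (N - 1)) / D"
    using j by (simp add: sum.remove w_def add_divide_distrib)
  also have "\<dots> = 1"
    using j D by (simp add: D_def of_nat_diff)
  finally obtain p where p: "user_pmf N p" "\<And>i. i < N \<Longrightarrow> pmf p i = w i"
    using user_pmf_exists[of N w] D s by (force simp: w_def)
  define k' where "k' i = (if i = j then B else 0)" for i
  have "(\<Sum>i<N. total_age (pmf p i) (\<sigma> i) T)
      \<le> (\<Sum>i<N. (T + k' i) / pmf p i + real (k' i) * (real (k' i) - 1) / 2)"
    by (rule sum_total_age_upper) (use p(2) D s k in \<open>auto simp: w_def k'_def\<close>)
  also have "\<dots> = (T + B) / w j + real B * (real B - 1) / 2 + (\<Sum>i\<in>{..<N} - {j}. T / w i)"
    using j p(2) by (simp add: sum.remove k'_def)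
  also have "\<dots> = (s + N - 1)\<^sup>2 * T + real B * (real B - 1) / 2"
  proof -
    have "real T + B = T * s\<^sup>2"
      using \<alpha> s by (simp add: algebra_simps)
    then have "(T + B) / w j = T * s * D"
      using D s by (simp add: w_def power2_eq_square field_simps)
    moreover have "(\<Sum>i\<in>{..<N} - {j}. T / w i) = (N - 1) * T * D"
      using j by (simp add: w_def of_nat_diff)
    ultimately show ?thesis
      using j by (simp add: D_def power2_eq_square of_nat_diff algebra_simps)
  qed
  finally show ?thesis
    using p(1) unfolding s_def by blast
qed

lemma best_response_spread_blocking:
  assumes N: "1 \<le> N" and k: "\<And>i. i < N \<Longrightarrow> blocked_slots (\<sigma> i) T < B"
    "(\<Sum>i<N. blocked_slots (\<sigma> i) T) \<le> B"
  shows "\<exists>p. user_pmf N p \<and>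
           (\<Sum>i<N. total_age (pmf p i) (\<sigma> i) T) \<le> real N ^ 2 * T + real N * B + real B * (real B - 2) / 2"
proof -
  define p where "p = pmf_of_set {..<N}"
  define a where "a = real N + (real B - 2) / 2"
  define m where "m i = real (blocked_slots (\<sigma> i) T)" for i
  have ne: "{..<N} \<noteq> {}"
    using N by (auto simp: lessThan_empty_iff)
  have p: "user_pmf N p" "\<And>i. i < N \<Longrightarrow> pmf p i = 1 / N"
    using ne by (auto simp: p_def user_pmf_def)
  have a: "0 \<le> a"
    using N by (simp add: a_def field_simps)
  have "(\<Sum>i<N. total_age (pmf p i) (\<sigma> i) T) \<le> (\<Sum>i<N. (T + m i) / (1 / N) + m i * (m i - 1) / 2)"
    using sum_total_age_upper[of N p \<sigma> T "\<lambda>i. blocked_slots (\<sigma> i) T"] N p(2) by (simp add: m_def)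
  also have "\<dots> \<le> (\<Sum>i<N. N * T + a * m i)"
  proof (intro sum_mono)
    fix i assume "i \<in> {..<N}"
    then have "blocked_slots (\<sigma> i) T + 1 \<le> B"
      using k(1) by (simp add: Suc_le_eq)
    then have "m i + 1 \<le> B"
      unfolding m_def by (metis of_nat_1 of_nat_add of_nat_le_iff)
    then have "m i * (m i - 1) \<le> m i * (real B - 2)"
      by (intro mult_left_mono) (auto simp: m_def)
    then show "(T + m i) / (1 / N) + m i * (m i - 1) / 2 \<le> N * T + a * m i"
      by (simp add: a_def field_simps)
  qed
  also have "\<dots> = real N ^ 2 * T + a * (\<Sum>i<N. blocked_slots (\<sigma> i) T)"
    by (simp add: sum.distrib sum_distrib_left power2_eq_square m_def)
  also have "\<dots> \<le> real N ^ 2 * T + a * B"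
    using k(2) a by (intro add_left_mono mult_left_mono) (simp_all flip: of_nat_sum)
  also have "\<dots> = real N ^ 2 * T + real N * B + real B * (real B - 2) / 2"
    by (simp add: a_def field_simps)
  finally show ?thesis
    using p(1) by blast
qed

lemma best_response_bound:
  assumes "1 \<le> N" "0 \<le> \<alpha>" "real B = \<alpha> * T" "feasible N T \<alpha> \<sigma>"
  shows "\<exists>p. user_pmf N p \<and> (\<Sum>i<N. total_age (pmf p i) (\<sigma> i) T) \<le>
           max ((sqrt (1 + \<alpha>) + N - 1)\<^sup>2 * T + real B * (real B - 1) / 2)
               (real N ^ 2 * T + real N * B + real B * (real B - 2) / 2)"
proof -
  define k where "k i = blocked_slots (\<sigma> i) T" for i
  have total: "(\<Sum>i<N. k i) \<le> B"
    using sum_blocked_slots_le[OF assms(4)] assms(3) unfolding k_def by linarith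
  show ?thesis
  proof (cases "\<exists>j<N. B \<le> k j")
    case True
    then obtain j where j: "j < N" "B \<le> k j"
      by blast
    have split: "(\<Sum>i<N. k i) = k j + (\<Sum>i\<in>{..<N} - {j}. k i)"
      using j by (simp add: sum.remove)
    have "k i = 0" if "i < N" "i \<noteq> j" for i
      using that split total j member_le_sum[of i "{..<N} - {j}" k] by fastforce
    moreover have "k j \<le> B"
      using split total by linarith
    ultimately show ?thesis
      using best_response_concentrated_blocking[OF j(1) assms(2,3), of \<sigma>] unfolding k_def
      by (meson max.cobounded1 order_trans)
  next
    case False
    then show ?thesis
      using best_response_spread_blocking[OF assms(1), of \<sigma> T B] total unfolding k_def
      by (meson max.cobounded2 not_le order_trans)
  qed
qed

section \<open>Best responses of the adversary\<close>

lemma least_likely_user: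
  assumes "user_pmf N p"
  obtains j where "j < N" "\<And>i. i < N \<Longrightarrow> pmf p j \<le> pmf p i" "real N * pmf p j \<le> 1"
proof -
  have "{..<N} \<noteq> {}"
    using assms set_pmf_not_empty[of p] unfolding user_pmf_def by blast
  then have j: "arg_min_on (pmf p) {..<N} < N" "\<And>i. i < N \<Longrightarrow> pmf p (arg_min_on (pmf p) {..<N}) \<le> pmf p i"
    using arg_min_if_finite[of "{..<N}" "pmf p"] by (auto simp: not_less)
  then have "(\<Sum>i<N. pmf p (arg_min_on (pmf p) {..<N})) \<le> (\<Sum>i<N. pmf p i)"
    by (intro sum_mono) auto
  with j show ?thesis
    using that sum_pmf_user_pmf[OF assms] by simp
qed

definition block_user :: "nat \<Rightarrow> nat \<Rightarrow> nat \<Rightarrow> nat \<Rightarrow> nat \<Rightarrow> bool" where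
  "block_user j c B i t \<longleftrightarrow> i \<noteq> j \<or> unblocked_outside c B t"

lemma feasible_block_user:
  fixes \<alpha> :: real
  assumes "j < N" "1 \<le> c" "c + B \<le> T + 1" "real B \<le> \<alpha> * T"
  shows "feasible N T \<alpha> (block_user j c B)"
proof -
  have "{(i, t). i < N \<and> t \<in> {1..T} \<and> \<not> block_user j c B i t} = {j} \<times> {c..<c + B}"
    using assms(1-3) by (auto simp: block_user_def unblocked_outside_def)
  with assms(4) show ?thesis
    by (simp add: feasible_def block_user_def)
qed

lemma sum_total_age_block_user:
  assumes "j < N"
  shows "(\<Sum>i<N. total_age (x i) (block_user j c B i) T) =
           total_age (x j) (unblocked_outside c B) T + (\<Sum>i\<in>{..<N} - {j}. total_age (x i) (\<lambda>_. True) T)"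
proof -
  have "block_user j c B j = unblocked_outside c B" "\<And>i. i \<noteq> j \<Longrightarrow> block_user j c B i = (\<lambda>_. True)"
    by (auto simp: block_user_def fun_eq_iff)
  with assms show ?thesis
    by (simp add: sum.remove)
qed

lemma sum_total_age_block_user_lower:
  fixes c B L T :: nat and K \<kappa> :: real
  assumes p: "user_pmf N p"
    and j: "j < N" "\<And>i. i < N \<Longrightarrow> pmf p j \<le> pmf p i" "real N * pmf p j \<le> 1"
    and \<kappa>: "0 < \<kappa>" "\<kappa> \<le> pmf p j"
    and w: "T = c + B + L" "1 \<le> c" "0 \<le> K" "real B \<le> K * c" "real B \<le> K * L"
  shows "real N ^ 2 * T + real N * B + real B * (real B - 1) / 2 - (real N + 1 + 2 * K) / \<kappa>\<^sup>2
           \<le> (\<Sum>i<N. total_age (pmf p i) (block_user j c B i) T)"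
proof -
  define x where "x i = pmf p i" for i
  define others where "others = {..<N} - {j}"
  have x: "\<kappa> \<le> x i" "0 < x i" "x i \<le> 1" if "i < N" for i
    using j(2)[OF that] \<kappa> pmf_le_1[of p i] unfolding x_def by auto
  have "T / x j + real B * (real B - 1) / 2 + real N * B - (2 + 2 * K) / \<kappa>\<^sup>2
      \<le> total_age (x j) (unblocked_outside c B) T"
    using total_age_unblocked_outside_lower_uniform[OF \<kappa>(1) x(1,3)[OF j(1)] j(3)[folded x_def] w] .
  moreover have "(\<Sum>i\<in>others. T / x i - 1 / \<kappa>\<^sup>2) \<le> (\<Sum>i\<in>others. total_age (x i) (\<lambda>_. True) T)"
  proof (intro sum_mono)
    fix i assume "i \<in> others"
    then have "1 / (x i)\<^sup>2 \<le> 1 / \<kappa>\<^sup>2"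
      using x[of i] \<kappa>(1) by (intro divide_left_mono power_mono) (auto simp: others_def)
    with \<open>i \<in> others\<close> show "T / x i - 1 / \<kappa>\<^sup>2 \<le> total_age (x i) (\<lambda>_. True) T"
      using x[of i] total_age_unblocked_prefix_lower[of "x i" T "\<lambda>_. True"] by (auto simp: others_def)
  qed
  moreover have "real N ^ 2 * T \<le> T / x j + (\<Sum>i\<in>others. T / x i)"
  proof -
    have "real N ^ 2 * T \<le> (\<Sum>i<N. 1 / x i) * T"
      using sum_inverse_ge_square[of N x] x sum_pmf_user_pmf[OF p] by (simp add: x_def mult_right_mono)
    then show ?thesis
      using j(1) by (simp add: others_def sum.remove sum_distrib_right distrib_right)
  qed
  moreover have "(\<Sum>i\<in>others. T / x i - 1 / \<kappa>\<^sup>2) = (\<Sum>i\<in>others. T / x i) - (real N - 1) / \<kappa>\<^sup>2"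
    using j(1) by (simp add: others_def sum_subtractf of_nat_diff)
  moreover have "(real N + 1 + 2 * K) / \<kappa>\<^sup>2 = (2 + 2 * K) / \<kappa>\<^sup>2 + (real N - 1) / \<kappa>\<^sup>2"
    by (simp add: add_divide_distrib[symmetric])
  ultimately show ?thesis
    unfolding sum_total_age_block_user[OF j(1)] others_def[symmetric] x_def[symmetric]
    by linarith
qed

lemma sum_total_age_block_unlikely_user_lower:
  fixes c B L T :: nat and K \<kappa> :: real
  assumes j: "j < N" "pmf p j \<le> \<kappa>"
    and \<kappa>: "0 < \<kappa>" "real N ^ 2 + N \<le> 1 / \<kappa>"
    and w: "T = c + B + L" "1 \<le> c" "0 \<le> K" "real B \<le> K * c" "real B \<le> K * L"
  shows "real N ^ 2 * T + real N * B + real B * (real B - 1) / 2 - (2 + 2 * K) / \<kappa>\<^sup>2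
           \<le> (\<Sum>i<N. total_age (pmf p i) (block_user j c B i) T)"
proof -
  have "1 \<le> real N"
    using j(1) by simp
  then have "1 \<le> 1 / \<kappa>"
    using \<kappa>(2) zero_le_power2[of "real N"] by linarith
  then have \<kappa>1: "\<kappa> \<le> 1"
    using \<kappa>(1) by (simp add: field_simps)
  have "T / \<kappa> + real B * (real B + 1) / 2 + B * (1 - \<kappa>) / \<kappa> - (2 + 2 * K) / \<kappa>\<^sup>2
      \<le> total_age \<kappa> (unblocked_outside c B) T"
    unfolding w(1) using \<kappa>(1) \<kappa>1 w(2-) by (intro total_age_unblocked_outside_lower)
  also have "\<dots> \<le> total_age (pmf p j) (unblocked_outside c B) T"
    using j(2) \<kappa>1 by (intro total_age_antimono) auto
  also have "\<dots> \<le> (\<Sum>i<N. total_age (pmf p i) (block_user j c B i) T)"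
    unfolding sum_total_age_block_user[OF j(1)]
    by (intro add_increasing2 sum_nonneg total_age_nonneg) (auto simp: pmf_le_1)
  finally have lower: "T / \<kappa> + real B * (real B + 1) / 2 + B * (1 - \<kappa>) / \<kappa> - (2 + 2 * K) / \<kappa>\<^sup>2
      \<le> (\<Sum>i<N. total_age (pmf p i) (block_user j c B i) T)" .
  have "real N ^ 2 * T + real N * B \<le> (real N ^ 2 + N) * T"
    using w(1) by (simp add: distrib_right mult_left_mono)
  also have "\<dots> \<le> T / \<kappa>"
    using mult_right_mono[OF \<kappa>(2), of "real T"] by simp
  finally have "real N ^ 2 * T + real N * B \<le> T / \<kappa>" .
  moreover have "0 \<le> B * (1 - \<kappa>) / \<kappa>"
    using \<kappa>(1) \<kappa>1 by simp
  moreover have "real B * (real B - 1) / 2 \<le> real B * (real B + 1) / 2"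
    by (simp add: divide_right_mono mult_left_mono)
  ultimately show ?thesis
    using lower by linarith
qed

(* The threshold kappa separates two regimes: if the least likely user is scheduled with
   probability at least kappa, the error terms of the window bound are O(1/kappa^2); otherwise
   its age alone already exceeds that of a user scheduled with probability kappa, which is
   about T/kappa = (N^2 + N) T. *)
lemma adversary_response_bound:
  fixes c B L T :: nat and K \<alpha> :: real
  assumes p: "user_pmf N p"
    and w: "T = c + B + L" "1 \<le> c" "0 \<le> K" "real B \<le> K * c" "real B \<le> K * L"
    and B: "real B \<le> \<alpha> * T"
  shows "\<exists>\<sigma>. feasible N T \<alpha> \<sigma> \<and>
           real N ^ 2 * T + real N * B + real B * (real B - 1) / 2 - (N + 1 + 2 * K) * (real N ^ 2 + N)\<^sup>2
             \<le> (\<Sum>i<N. total_age (pmf p i) (\<sigma> i) T)"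
proof -
  obtain j where j: "j < N" "\<And>i. i < N \<Longrightarrow> pmf p j \<le> pmf p i" "real N * pmf p j \<le> 1"
    using least_likely_user[OF p] by blast
  define \<kappa> where "\<kappa> = 1 / (real N ^ 2 + N)"
  have N: "1 \<le> real N"
    using j(1) by simp
  then have "0 < real N ^ 2 + N"
    using zero_le_power2[of "real N"] by linarith
  then have \<kappa>: "0 < \<kappa>" "real N ^ 2 + N = 1 / \<kappa>"
    by (simp_all add: \<kappa>_def)
  have E: "(real N + 1 + 2 * K) * (real N ^ 2 + N)\<^sup>2 = (real N + 1 + 2 * K) / \<kappa>\<^sup>2"
    unfolding \<kappa>(2) by (simp add: power_one_over)
  have E_le: "(2 + 2 * K) / \<kappa>\<^sup>2 \<le> (real N + 1 + 2 * K) / \<kappa>\<^sup>2"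
    using N by (intro divide_right_mono) auto
  have "feasible N T \<alpha> (block_user j c B)"
    using j(1) w(1,2) B by (intro feasible_block_user) auto
  moreover have "real N ^ 2 * T + real N * B + real B * (real B - 1) / 2 - (real N + 1 + 2 * K) / \<kappa>\<^sup>2
      \<le> (\<Sum>i<N. total_age (pmf p i) (block_user j c B i) T)"
  proof (cases "\<kappa> \<le> pmf p j")
    case True
    from sum_total_age_block_user_lower[OF p j \<kappa>(1) True w] show ?thesis .
  next
    case False
    then have "pmf p j \<le> \<kappa>" "real N ^ 2 + N \<le> 1 / \<kappa>"
      using \<kappa>(2) by simp_all
    from sum_total_age_block_unlikely_user_lower[OF j(1) this(1) \<kappa>(1) this(2) w] E_le show ?thesis
      by linarith
  qed
  ultimately show ?thesis
    unfolding E by blast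
qed

section \<open>No equilibrium for large horizons\<close>

lemma centered_window_exists:
  fixes B T :: nat and \<alpha> :: real
  assumes "\<alpha> < 1" "real B \<le> \<alpha> * T" "3 \<le> (1 - \<alpha>) * T"
  shows "\<exists>c L. T = c + B + L \<and> 1 \<le> c \<and> real B \<le> 3 / (1 - \<alpha>) * c \<and> real B \<le> 3 / (1 - \<alpha>) * L"
proof -
  define c where "c = (T - B) div 2"
  define L where "L = T - B - c"
  have "\<alpha> * T \<le> 1 * real T"
    using assms(1) by (intro mult_right_mono) auto
  then have BT: "B \<le> T"
    using assms(2) by simp
  have T: "T = c + B + L" and c: "real T - B - 1 \<le> 2 * c" "c \<le> L"
    using BT unfolding c_def L_def by linarith+
  have "(1 - \<alpha>) * B \<le> (1 - \<alpha>) * T"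
    using assms(1) BT by (intro mult_left_mono) auto
  then have "(1 - \<alpha>) * B \<le> 3 * c"
    using assms(2,3) c(1) by (simp add: algebra_simps)
  then have Bc: "real B \<le> 3 / (1 - \<alpha>) * c"
    using assms(1) by (simp add: field_simps)
  moreover have "3 / (1 - \<alpha>) * c \<le> 3 / (1 - \<alpha>) * L"
    using assms(1) c(2) by (intro mult_left_mono) auto
  moreover have "1 \<le> c"
    using assms(2,3) c(1) by (simp add: algebra_simps)
  ultimately show ?thesis
    using T by (intro exI[of _ c] exI[of _ L]) auto
qed

lemma best_response_bounds_gap:
  fixes B T :: nat and \<alpha> E :: real
  assumes "0 \<le> \<alpha>" "real B = \<alpha> * T" "E < B / 2" "E < (real N - 1) * (sqrt (1 + \<alpha>) - 1)\<^sup>2 * T"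
  shows "max ((sqrt (1 + \<alpha>) + N - 1)\<^sup>2 * T + real B * (real B - 1) / 2)
             (real N ^ 2 * T + real N * B + real B * (real B - 2) / 2)
           < real N ^ 2 * T + real N * B + real B * (real B - 1) / 2 - E"
proof -
  define s where "s = sqrt (1 + \<alpha>)"
  have "s\<^sup>2 = 1 + \<alpha>"
    using assms(1) by (simp add: s_def)
  then have "real N ^ 2 * T + real N * B - (s + N - 1)\<^sup>2 * T = (real N - 1) * (s - 1)\<^sup>2 * T"
    using assms(2) by (simp add: power2_eq_square algebra_simps)
  moreover have "real B * (real B - 1) / 2 = real B * (real B - 2) / 2 + B / 2"
    by (simp add: field_simps)
  ultimately show ?thesis
    using assms(3,4) unfolding s_def[symmetric] max_less_iff_conj by (intro conjI) linarith+
qed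

lemma best_response_gap:
  fixes \<alpha> E :: real
  assumes N: "2 \<le> N" and \<alpha>: "0 < \<alpha>" "\<alpha> < 1"
  defines "E \<equiv> (real N + 1 + 6 / (1 - \<alpha>)) * (real N ^ 2 + N)\<^sup>2"
  assumes T: "3 \<le> (1 - \<alpha>) * T" "E < \<alpha> / 2 * T" "E < (real N - 1) * (sqrt (1 + \<alpha>) - 1)\<^sup>2 * T"
    and "\<alpha> * T \<in> \<int>" "user_pmf N p" "feasible N T \<alpha> \<sigma>"
  shows "\<exists>p' \<sigma>'. user_pmf N p' \<and> feasible N T \<alpha> \<sigma>' \<and>
           (\<Sum>i<N. total_age (pmf p' i) (\<sigma> i) T) < (\<Sum>i<N. total_age (pmf p i) (\<sigma>' i) T)"
proof -
  define K where "K = 3 / (1 - \<alpha>)"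
  have K: "0 \<le> K" "E = (real N + 1 + 2 * K) * (real N ^ 2 + N)\<^sup>2"
    using \<alpha> by (simp_all add: K_def E_def)
  obtain z where "\<alpha> * T = of_int z"
    using \<open>\<alpha> * T \<in> \<int>\<close> by (auto elim: Ints_cases)
  moreover have "0 \<le> \<alpha> * T"
    using \<alpha> by simp
  ultimately obtain B :: nat where B: "real B = \<alpha> * T"
    by (intro that[of "nat z"]) simp
  have "\<exists>c L. T = c + B + L \<and> 1 \<le> c \<and> real B \<le> 3 / (1 - \<alpha>) * c \<and> real B \<le> 3 / (1 - \<alpha>) * L"
    using \<alpha>(2) B T(1) by (intro centered_window_exists) auto
  then obtain c L where w: "T = c + B + L" "1 \<le> c" "real B \<le> K * c" "real B \<le> K * L"
    unfolding K_def by blast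
  have "real B \<le> \<alpha> * T"
    using B by simp
  from adversary_response_bound[OF \<open>user_pmf N p\<close> w(1,2) K(1) w(3,4) this]
  obtain \<sigma>' where \<sigma>': "feasible N T \<alpha> \<sigma>'" and lower:
    "real N ^ 2 * T + real N * B + real B * (real B - 1) / 2 - E \<le> (\<Sum>i<N. total_age (pmf p i) (\<sigma>' i) T)"
    unfolding K(2) by blast
  have "1 \<le> N" "0 \<le> \<alpha>"
    using N \<alpha> by auto
  from best_response_bound[OF this B \<open>feasible N T \<alpha> \<sigma>\<close>]
  obtain p' where p': "user_pmf N p'" and upper: "(\<Sum>i<N. total_age (pmf p' i) (\<sigma> i) T) \<le>
      max ((sqrt (1 + \<alpha>) + N - 1)\<^sup>2 * T + real B * (real B - 1) / 2)
          (real N ^ 2 * T + real N * B + real B * (real B - 2) / 2)"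
    by blast
  have "E < real B / 2"
    using T(2) B by simp
  from best_response_bounds_gap[OF \<open>0 \<le> \<alpha>\<close> B this T(3)] upper lower have
    "(\<Sum>i<N. total_age (pmf p' i) (\<sigma> i) T) < (\<Sum>i<N. total_age (pmf p i) (\<sigma>' i) T)"
    by linarith
  with p' \<sigma>' show ?thesis
    by blast
qed

lemma eventually_best_response_gap:
  fixes \<alpha> :: real
  assumes N: "2 \<le> N" and \<alpha>: "0 < \<alpha>" "\<alpha> < 1"
  shows "\<forall>\<^sub>F T in sequentially. \<forall>p \<sigma>. \<alpha> * T \<in> \<int> \<longrightarrow> user_pmf N p \<longrightarrow> feasible N T \<alpha> \<sigma> \<longrightarrow>
           (\<exists>p' \<sigma>'. user_pmf N p' \<and> feasible N T \<alpha> \<sigma>' \<and>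
              (\<Sum>i<N. total_age (pmf p' i) (\<sigma> i) T) < (\<Sum>i<N. total_age (pmf p i) (\<sigma>' i) T))"
proof -
  define E where "E = (real N + 1 + 6 / (1 - \<alpha>)) * (real N ^ 2 + N)\<^sup>2"
  have "0 < (real N - 1) * (sqrt (1 + \<alpha>) - 1)\<^sup>2"
    using N \<alpha> by simp
  then have "\<forall>\<^sub>F T in sequentially. 3 < (1 - \<alpha>) * T \<and> E < \<alpha> / 2 * T \<and> E < (real N - 1) * (sqrt (1 + \<alpha>) - 1)\<^sup>2 * T"
    using \<alpha> by (intro eventually_conj eventually_less_mult_real) auto
  then show ?thesis
  proof (rule eventually_mono, intro allI impI)
    fix T :: nat and p \<sigma>
    assume "3 < (1 - \<alpha>) * T \<and> E < \<alpha> / 2 * T \<and> E < (real N - 1) * (sqrt (1 + \<alpha>) - 1)\<^sup>2 * T"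
    then have "3 \<le> (1 - \<alpha>) * T" "E < \<alpha> / 2 * T" "E < (real N - 1) * (sqrt (1 + \<alpha>) - 1)\<^sup>2 * T"
      by auto
    from best_response_gap[OF assms this[unfolded E_def]]
    show "\<alpha> * T \<in> \<int> \<Longrightarrow> user_pmf N p \<Longrightarrow> feasible N T \<alpha> \<sigma> \<Longrightarrow>
        \<exists>p' \<sigma>'. user_pmf N p' \<and> feasible N T \<alpha> \<sigma>' \<and>
          (\<Sum>i<N. total_age (pmf p' i) (\<sigma> i) T) < (\<Sum>i<N. total_age (pmf p i) (\<sigma>' i) T)" .
  qed
qed

theorem theorem6:
  fixes N :: nat and \<alpha> :: real
  assumes "N \<ge> 2" and "0 < \<alpha>" and "\<alpha> < 1"
  shows "\<exists>T0. \<forall>T \<ge> T0. \<alpha> * real T \<in> \<int> \<longrightarrow>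
           \<not> (\<exists>p \<sigma>. user_pmf N p \<and> feasible N T \<alpha> \<sigma> \<and>
                 (\<forall>p'. user_pmf N p' \<longrightarrow> payoff N T p \<sigma> \<le> payoff N T p' \<sigma>) \<and>
                 (\<forall>\<sigma>'. feasible N T \<alpha> \<sigma>' \<longrightarrow> payoff N T p \<sigma>' \<le> payoff N T p \<sigma>))"
proof -
  obtain T0 where T0: "\<And>T p \<sigma>. T0 \<le> T \<Longrightarrow> \<alpha> * T \<in> \<int> \<Longrightarrow> user_pmf N p \<Longrightarrow> feasible N T \<alpha> \<sigma> \<Longrightarrow>
      \<exists>p' \<sigma>'. user_pmf N p' \<and> feasible N T \<alpha> \<sigma>' \<and>
        (\<Sum>i<N. total_age (pmf p' i) (\<sigma> i) T) < (\<Sum>i<N. total_age (pmf p i) (\<sigma>' i) T)"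
    using eventually_best_response_gap[OF assms] unfolding eventually_sequentially by blast
  show ?thesis
  proof (intro exI[of _ T0] allI impI notI, elim exE conjE)
    fix T p \<sigma>
    assume T: "T0 \<le> T" "\<alpha> * T \<in> \<int>" and p: "user_pmf N p" and \<sigma>: "feasible N T \<alpha> \<sigma>"
      and bs: "\<forall>p'. user_pmf N p' \<longrightarrow> payoff N T p \<sigma> \<le> payoff N T p' \<sigma>"
      and adv: "\<forall>\<sigma>'. feasible N T \<alpha> \<sigma>' \<longrightarrow> payoff N T p \<sigma>' \<le> payoff N T p \<sigma>"
    obtain p' \<sigma>' where p': "user_pmf N p'" and \<sigma>': "feasible N T \<alpha> \<sigma>'"
      and less: "(\<Sum>i<N. total_age (pmf p' i) (\<sigma> i) T) < (\<Sum>i<N. total_age (pmf p i) (\<sigma>' i) T)"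
      using T0[OF T p \<sigma>] by blast
    have "payoff N T p' \<sigma> < payoff N T p \<sigma>'"
      using payoff_less_payoff[OF p' p less] .
    moreover have "payoff N T p \<sigma>' \<le> payoff N T p' \<sigma>"
      using adv \<sigma>' bs p' by (meson order_trans)
    ultimately show False
      by simp
  qed
qed

end
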